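(* Let $P\in N_1$ be a sum of $6$ monomials, not necessarily distinct (i.e. $P(1)=6$). If $P$ does not have unique factorisation inside $N_1$, then $P=X^a(1+X^b+X^{2b}+X^{3b}+X^{4b}+X^{5b})$ for some integers $a\ge0$ and $b\ge1$.
   Context: $N_1=\mathbb{Z}_{\ge0}[X]$ is the semiring of univariate polynomials with nonnegative integer coefficients. An element $Q\neq0,1$ of $N_1$ is irreducible if in every factorisation $Q=ST$ with $S,T\in N_1$ one of $S,T$ is $1$. $P$ has unique factorisation in $N_1$ if any two factorisations of $P$ into irreducibles of $N_1$ coincide up to order of the factors. *)

theory Defs
  imports "HOL-Computational_Algebra.Polynomial" "HOL-Library.Multiset"
begin

text \<open>N_1 = Z_{>=0}[X] is rendered as the type nat poly.\<close>

definition N1_irreducible :: "nat poly \<Rightarrow> bool" where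
  "N1_irreducible Q \<longleftrightarrow> Q \<noteq> 0 \<and> Q \<noteq> 1 \<and>
     (\<forall>S T. Q = S * T \<longrightarrow> S = 1 \<or> T = 1)"

definition N1_factorisation :: "nat poly multiset \<Rightarrow> nat poly \<Rightarrow> bool" where
  "N1_factorisation M P \<longleftrightarrow> (\<forall>Q\<in>#M. N1_irreducible Q) \<and> prod_mset M = P"

definition N1_unique_factorisation :: "nat poly \<Rightarrow> bool" where
  "N1_unique_factorisation P \<longleftrightarrow>
     (\<forall>M M'. N1_factorisation M P \<longrightarrow> N1_factorisation M' P \<longrightarrow> M = M')"

end

theory Submission
  imports Defs
begin

text \<open>Write an element of \<open>N\<^sub>1\<close> as the sum of the monomials \<open>X\<^sup>e\<close> over its multiset of
  exponents; its value at 1 is the number of monomials. An irreducible of value 1 is \<open>X\<close>, and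
  every other irreducible has value at least 2 and nonzero constant term. After splitting off the
  powers of \<open>X\<close>, whose number is the lowest exponent of \<open>P\<close>, two distinct factorisations of
  \<open>P\<close> differ in the remaining factors, whose values multiply to 6. Their product is then
  reducible, so both factorisations consist of a binomial \<open>1 + X\<^sup>k\<close> and a trinomial
  \<open>1 + X\<^sup>p + X\<^sup>q\<close>. Comparing the two resulting six-element exponent multisets
  \<open>{0, p, q, k, k + p, k + q}\<close> element by element forces them to be \<open>{0, b, \<dots>, 5b}\<close>.\<close>

definition exponents :: "nat poly \<Rightarrow> nat multiset" where
  "exponents P = Abs_multiset (coeff P)"

definition poly_of_exponents :: "nat multiset \<Rightarrow> nat poly" where
  "poly_of_exponents E = (\<Sum>e\<in>#E. monom 1 e)"

lemma count_exponents: "count (exponents P) = coeff P"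
proof -
  have "finite {n. 0 < coeff P n}"
    by (rule finite_subset[of _ "{..degree P}"]) (auto intro: le_degree)
  then show ?thesis
    unfolding exponents_def by simp
qed

lemma poly_of_exponents_empty [simp]: "poly_of_exponents {#} = 0"
  by (simp add: poly_of_exponents_def)

lemma poly_of_exponents_add_mset [simp]:
  "poly_of_exponents (add_mset e E) = monom 1 e + poly_of_exponents E"
  by (simp add: poly_of_exponents_def)

lemma poly_of_exponents_union:
  "poly_of_exponents (E + F) = poly_of_exponents E + poly_of_exponents F"
  by (simp add: poly_of_exponents_def)

lemma coeff_poly_of_exponents: "coeff (poly_of_exponents E) n = count E n"
  by (induction E) auto

lemma poly_of_exponents_exponents [simp]: "poly_of_exponents (exponents P) = P"
  by (rule poly_eqI) (simp add: coeff_poly_of_exponents count_exponents)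

lemma exponents_poly_of_exponents [simp]: "exponents (poly_of_exponents E) = E"
  by (rule multiset_eqI) (simp add: count_exponents coeff_poly_of_exponents)

lemma poly_poly_of_exponents_1: "poly (poly_of_exponents E) 1 = size E"
  by (induction E) (auto simp: poly_monom)

lemma size_exponents: "size (exponents P) = poly P 1"
  by (metis poly_of_exponents_exponents poly_poly_of_exponents_1)

lemma monom_mult_poly_of_exponents:
  "monom 1 a * poly_of_exponents E = poly_of_exponents (image_mset ((+) a) E)"
  by (induction E) (auto simp: distrib_left mult_monom)

lemma poly_of_exponents_mult:
  "poly_of_exponents E * poly_of_exponents F = poly_of_exponents (\<Sum>e\<in>#E. image_mset ((+) e) F)"
proof (induction E)
  case (add e E)
  have "poly_of_exponents (add_mset e E) * poly_of_exponents F
      = monom 1 e * poly_of_exponents F + poly_of_exponents E * poly_of_exponents F"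
    by (simp add: distrib_right)
  also have "\<dots> = poly_of_exponents (image_mset ((+) e) F + (\<Sum>e\<in>#E. image_mset ((+) e) F))"
    by (simp only: monom_mult_poly_of_exponents add.IH poly_of_exponents_union)
  finally show ?case
    by simp
qed simp

lemma exponents_add_mset_0: "coeff P 0 \<noteq> 0 \<Longrightarrow> exponents P = add_mset 0 (exponents P - {#0#})"
  by (simp add: count_exponents flip: count_greater_zero_iff)

lemma poly_1_eq_0_iff: "poly (P :: nat poly) 1 = 0 \<longleftrightarrow> P = 0"
  by (metis poly_0 poly_of_exponents_empty poly_of_exponents_exponents size_eq_0_iff_empty
      size_exponents)

lemma poly_1_eq_1_imp_monom: "poly (P :: nat poly) 1 = 1 \<Longrightarrow> \<exists>j. P = monom 1 j"
  by (metis add_0_right poly_of_exponents_add_mset poly_of_exponents_empty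
      poly_of_exponents_exponents size_1_singleton_mset size_exponents)

lemma poly_1_eq_2_imp_binomial:
  assumes "poly A 1 = 2" "coeff A 0 \<noteq> 0"
  shows "\<exists>k. A = poly_of_exponents {#0, k#}"
proof -
  have E: "exponents A = add_mset 0 (exponents A - {#0#})"
    using assms(2) by (rule exponents_add_mset_0)
  then have "size (exponents A - {#0#}) = 1"
    using assms(1) size_exponents by (metis One_nat_def Suc_1 nat.inject size_add_mset)
  then obtain k where "exponents A - {#0#} = {#k#}"
    using size_1_singleton_mset by blast
  then have "exponents A = {#0, k#}"
    using E by simp
  then show ?thesis
    by (metis poly_of_exponents_exponents)
qed

lemma poly_1_eq_3_imp_trinomial:
  assumes "poly B 1 = 3" "coeff B 0 \<noteq> 0"
  shows "\<exists>p q. p \<le> q \<and> B = poly_of_exponents {#0, p, q#}"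
proof -
  have E: "exponents B = add_mset 0 (exponents B - {#0#})"
    using assms(2) by (rule exponents_add_mset_0)
  then have "size (exponents B - {#0#}) = Suc 1"
    using assms(1) size_exponents by (metis numeral_3_eq_3 One_nat_def nat.inject size_add_mset)
  then obtain u F where "exponents B - {#0#} = add_mset u F" "size F = 1"
    by (metis size_eq_Suc_imp_eq_union size_add_mset nat.inject)
  then obtain v where "exponents B = {#0, u, v#}"
    using E size_1_singleton_mset by metis
  moreover have "{#0, u, v#} = {#0, min u v, max u v#}"
    by (cases "u \<le> v") (auto simp: add_mset_commute)
  ultimately have "B = poly_of_exponents {#0, min u v, max u v#}"
    by (metis poly_of_exponents_exponents)
  then show ?thesis
    by (intro exI[of _ "min u v"] exI[of _ "max u v"]) simp
qed

lemma binomial_mult_trinomial: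
  "poly_of_exponents {#0, k#} * poly_of_exponents {#0, p, q#}
     = poly_of_exponents {#0, p, q, k, k + p, k + q#}"
  unfolding poly_of_exponents_mult by (rule arg_cong[where f = poly_of_exponents]) simp

lemma geometric_exponents:
  "poly_of_exponents {#0, 2 * b, 4 * b, b, b + 2 * b, b + 4 * b#} = (\<Sum>i<6. monom 1 (i * b))"
  by (simp add: numeral_eq_Suc lessThan_Suc add_ac)

text \<open>\<open>nat poly\<close> is not an instance of a cancellative semiring class; cancellation is
  inherited from the integral domain \<open>int poly\<close>.\<close>

lemma map_poly_int_mult: "map_poly int (p * q) = map_poly int p * map_poly int q"
  by (rule poly_eqI) (simp add: coeff_mult coeff_map_poly)

lemma map_poly_int_inject: "map_poly int p = map_poly int q \<longleftrightarrow> p = q"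
  by (metis coeff_map_poly of_nat_0 of_nat_eq_iff poly_eqI)

lemma nat_poly_mult_left_cancel:
  fixes A B C :: "nat poly"
  assumes "A \<noteq> 0" "A * B = A * C"
  shows "B = C"
proof -
  have "map_poly int A \<noteq> 0"
    using assms(1) map_poly_int_inject by fastforce
  moreover have "map_poly int A * map_poly int B = map_poly int A * map_poly int C"
    using assms(2) by (metis map_poly_int_mult)
  ultimately show ?thesis
    by (simp add: map_poly_int_inject)
qed

lemma nat_poly_mult_eq_1:
  fixes A B :: "nat poly"
  assumes "A * B = 1"
  shows "A = 1"
proof -
  have "poly A 1 * poly B 1 = 1"
    using arg_cong[OF assms, of "\<lambda>P. poly P 1"] by simp
  then obtain j l where "A = monom 1 j" "B = monom 1 l"
    using poly_1_eq_1_imp_monom by (metis nat_mult_eq_1_iff)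
  then show ?thesis
    using assms by (simp add: mult_monom monom_eq_1_iff)
qed

lemma coeff_0_prod_mset_nonzero:
  "(\<And>Q. Q \<in># N \<Longrightarrow> coeff Q 0 \<noteq> 0) \<Longrightarrow> coeff (prod_mset N :: nat poly) 0 \<noteq> 0"
  by (induction N) (auto simp: coeff_mult_0)

lemma two_pow_size_le_poly_prod_mset:
  "(\<And>Q. Q \<in># N \<Longrightarrow> 2 \<le> poly Q 1) \<Longrightarrow> 2 ^ size N \<le> poly (prod_mset N :: nat poly) 1"
  by (induction N) (auto intro: mult_le_mono)

lemma monom_mult_cancel:
  fixes R R' :: "'a :: comm_semiring_1 poly"
  assumes eq: "monom 1 r * R = monom 1 r' * R'" and "coeff R 0 \<noteq> 0" "coeff R' 0 \<noteq> 0"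
  shows "r = r' \<and> R = R'"
proof -
  have co: "coeff (monom 1 r * R) n = coeff (monom 1 r' * R') n" for n
    using eq by simp
  have "r = r'"
    using co[of r] co[of r'] assms(2,3) by (cases r r' rule: linorder_cases) (auto simp: coeff_monom_mult)
  moreover have "R = R'"
    using co[of "_ + r"] \<open>r = r'\<close> by (intro poly_eqI) (simp add: coeff_monom_mult)
  ultimately show ?thesis ..
qed

lemma N1_irreducible_nonzero: "N1_irreducible Q \<Longrightarrow> Q \<noteq> 0"
  unfolding N1_irreducible_def by simp

lemma N1_irreducible_poly_1_eq_1:
  assumes "N1_irreducible Q" "poly Q 1 = 1"
  shows "Q = monom 1 1"
proof -
  obtain j where j: "Q = monom 1 j"
    using poly_1_eq_1_imp_monom assms(2) by blast
  then have "j \<noteq> 0"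
    using assms(1) unfolding N1_irreducible_def by (auto simp: monom_eq_1_iff)
  then obtain i where "j = Suc i"
    using not0_implies_Suc by blast
  then have "Q = monom 1 1 * monom 1 i"
    using j by (simp add: mult_monom)
  then have "monom (1 :: nat) i = 1"
    using assms(1) unfolding N1_irreducible_def by (metis monom_eq_1_iff zero_neq_one)
  then have "i = 0"
    by (simp add: monom_eq_1_iff)
  then show ?thesis
    using j \<open>j = Suc i\<close> by simp
qed

lemma N1_irreducible_coeff_0:
  assumes "N1_irreducible Q" "Q \<noteq> monom 1 1"
  shows "coeff Q 0 \<noteq> 0"
proof
  assume "coeff Q 0 = 0"
  moreover obtain a q where Q: "Q = pCons a q"
    by (cases Q)
  ultimately have "Q = monom 1 1 * q"
    by (intro poly_eqI) (auto simp: coeff_monom_mult coeff_pCons split: nat.split)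
  then have "q = 1"
    using assms(1) unfolding N1_irreducible_def by (metis monom_eq_1_iff zero_neq_one)
  then show False
    using assms(2) \<open>Q = monom 1 1 * q\<close> by simp
qed

lemma N1_irreducible_poly_1_ge_2:
  assumes "N1_irreducible Q" "Q \<noteq> monom 1 1"
  shows "2 \<le> poly Q 1"
  using assms N1_irreducible_poly_1_eq_1 N1_irreducible_nonzero poly_1_eq_0_iff
  by (metis One_nat_def less_2_cases_iff not_le)

lemma N1_factorisation_of_1: "N1_factorisation M 1 \<Longrightarrow> M = {#}"
  unfolding N1_factorisation_def N1_irreducible_def
  by (cases M) (auto dest: nat_poly_mult_eq_1)

lemma N1_factorisation_of_irreducible:
  assumes "N1_factorisation M R" "N1_irreducible R"
  shows "M = {#R#}"
proof (cases M)
  case empty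
  then show ?thesis
    using assms unfolding N1_factorisation_def N1_irreducible_def by simp
next
  case (add Q M0)
  then have Q: "N1_irreducible Q" and M0: "N1_factorisation M0 (prod_mset M0)"
    using assms(1) unfolding N1_factorisation_def by auto
  have "R = Q * prod_mset M0"
    using assms(1) add unfolding N1_factorisation_def by simp
  then have "prod_mset M0 = 1"
    using assms(2) Q unfolding N1_irreducible_def by blast
  then have "M0 = {#}"
    using M0 N1_factorisation_of_1 by simp
  then show ?thesis
    using add \<open>R = Q * prod_mset M0\<close> by simp
qed

lemma N1_factorisation_split_X:
  assumes "N1_factorisation M P"
  obtains r N where "M = replicate_mset r (monom 1 1) + N" "P = monom 1 r * prod_mset N"
    and "\<forall>Q\<in>#N. N1_irreducible Q \<and> coeff Q 0 \<noteq> 0 \<and> 2 \<le> poly Q 1"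
proof
  define N where "N = filter_mset (\<lambda>Q. Q \<noteq> monom 1 1) M"
  show M: "M = replicate_mset (count M (monom 1 1)) (monom 1 1) + N"
    unfolding N_def by (metis filter_eq_replicate_mset multiset_partition)
  have "prod_mset (replicate_mset r (monom 1 1)) = (monom 1 r :: nat poly)" for r
    by (simp add: monom_power)
  then show "P = monom 1 (count M (monom 1 1)) * prod_mset N"
    using assms M unfolding N1_factorisation_def by (metis prod_mset.union)
  show "\<forall>Q\<in>#N. N1_irreducible Q \<and> coeff Q 0 \<noteq> 0 \<and> 2 \<le> poly Q 1"
    using assms N1_irreducible_coeff_0 N1_irreducible_poly_1_ge_2
    unfolding N_def N1_factorisation_def by auto
qed

lemma reducible_prod_mset_poly_1_eq_6:
  assumes N: "\<forall>Q\<in>#N. N1_irreducible Q \<and> 2 \<le> poly Q 1"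
    and six: "poly (prod_mset N) 1 = 6" and reducible: "\<not> N1_irreducible (prod_mset N)"
  obtains A B where "N = {#A, B#}" "poly A 1 = 2" "poly B 1 = 3"
proof -
  have "2 ^ size N \<le> (6 :: nat)"
    using two_pow_size_le_poly_prod_mset N six by metis
  then have "size N < 3"
    using power_increasing[of 3 "size N" "2 :: nat"] by (auto simp: not_less[symmetric])
  moreover have "size N \<noteq> 0"
    using six by auto
  moreover have "size N \<noteq> 1"
  proof
    assume "size N = 1"
    then obtain R where "N = {#R#}"
      using size_1_singleton_mset by blast
    then show False
      using N reducible by simp
  qed
  ultimately have "size N = Suc 1"
    by linarith
  then obtain A N0 where "N = add_mset A N0" "size N0 = 1"
    by (metis size_eq_Suc_imp_eq_union size_add_mset nat.inject)
  then obtain B where AB: "N = {#A, B#}"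
    using size_1_singleton_mset by metis
  then have prod: "poly A 1 * poly B 1 = 6" and "2 \<le> poly A 1" "2 \<le> poly B 1"
    using N six by auto
  then have "poly A 1 * 2 \<le> 6"
    by (metis mult_le_mono2)
  then have "poly A 1 = 2 \<or> poly A 1 = 3"
    using \<open>2 \<le> poly A 1\<close> by linarith
  then have "poly A 1 = 2 \<and> poly B 1 = 3 \<or> poly A 1 = 3 \<and> poly B 1 = 2"
    using prod by auto
  then show thesis
    using that AB by (metis add_mset_commute)
qed

lemma sumset_pair_triple_eq_imp_progression:
  fixes k m p1 p2 q1 q2 :: nat
  assumes eq: "{#0, p1, p2, k, k + p1, k + p2#} = {#0, q1, q2, m, m + q1, m + q2#}"
    and "k < m" "p1 \<le> p2" "q1 \<le> q2"
  shows "m = 3 * k \<and> p1 = 2 * k \<and> p2 = 4 * k"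
proof -
  have c: "count {#0, p1, p2, k, k + p1, k + p2#} x = count {#0, q1, q2, m, m + q1, m + q2#} x" for x
    using eq by simp
  have top: "k + p2 = m + q2"
    using c[of "m + q2"] c[of "k + p2"] assms(2-) by (auto split: if_splits)
  have "k \<noteq> 0"
  proof
    assume "k = 0"
    then have "q1 = q2"
      using c[of "m + q2"] assms(2-) top by (auto split: if_splits)
    then show False
      using c[of m] assms(2-) \<open>k = 0\<close> top by (auto split: if_splits)
  qed
  have "k < p1"
  proof (rule ccontr)
    assume "\<not> k < p1"
    then have "q1 = p1"
      using c[of q1] c[of p1] assms(2-) by (auto split: if_splits)
    then have "q2 = k"
      using c[of k] assms(2-) \<open>\<not> k < p1\<close> top by (auto split: if_splits)
    then have "p1 = k"
      using c[of "m + p1"] assms(2-) \<open>\<not> k < p1\<close> top \<open>q1 = p1\<close> by (auto split: if_splits)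
    then show False
      using c[of "m + k"] assms(2-) top \<open>q1 = p1\<close> \<open>q2 = k\<close> by (auto split: if_splits)
  qed
  have "q1 = k"
  proof (rule linorder_cases)
    assume "q1 < k"
    then show ?thesis
      using c[of q1] assms(2-) \<open>k < p1\<close> \<open>k \<noteq> 0\<close> by (auto split: if_splits)
  next
    assume "k < q1"
    then show ?thesis
      using c[of k] assms(2-) \<open>k < p1\<close> by (auto split: if_splits)
  qed
  have "p1 = q2 \<or> p1 = m"
    using c[of p1] c[of q2] c[of m] assms(2-) \<open>k < p1\<close> top \<open>q1 = k\<close> by (auto split: if_splits)
  moreover have "p1 \<noteq> m"
    using c[of p2] assms(2-) \<open>k < p1\<close> top \<open>q1 = k\<close> \<open>k \<noteq> 0\<close> by (auto split: if_splits)
  ultimately have "p1 = q2"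
    by blast
  have "m = k + p1"
    using c[of m] assms(2-) \<open>k < p1\<close> top \<open>q1 = k\<close> \<open>p1 = q2\<close> \<open>k \<noteq> 0\<close> by (auto split: if_splits)
  moreover have "p1 = 2 * k"
    using c[of "m + k"] assms(2-) \<open>k < p1\<close> top \<open>q1 = k\<close> \<open>p1 = q2\<close> \<open>k \<noteq> 0\<close> \<open>m = k + p1\<close>
    by (auto split: if_splits)
  ultimately show ?thesis
    using top \<open>p1 = q2\<close> by linarith
qed

lemma binomial_trinomial_factorisations_eq:
  fixes A B A' B' :: "nat poly"
  assumes eq: "A * B = A' * B'" and "A \<noteq> A'"
    and "poly A 1 = 2" "poly B 1 = 3" "poly A' 1 = 2" "poly B' 1 = 3"
    and "coeff A 0 \<noteq> 0" "coeff B 0 \<noteq> 0" "coeff A' 0 \<noteq> 0" "coeff B' 0 \<noteq> 0"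
  shows "\<exists>b\<ge>1. A * B = (\<Sum>i<6. monom 1 (i * b))"
proof -
  have progression: "\<exists>b\<ge>1. poly_of_exponents {#0, k#} * poly_of_exponents {#0, p, q#}
      = (\<Sum>i<6. monom 1 (i * b))"
    if "poly_of_exponents {#0, k#} * poly_of_exponents {#0, p, q#}
      = poly_of_exponents {#0, m#} * poly_of_exponents {#0, p', q'#}"
      and "k < m" "p \<le> q" "p' \<le> q'" for k p q m p' q'
  proof -
    have "{#0, p, q, k, k + p, k + q#} = {#0, p', q', m, m + p', m + q'#}"
      using that(1) unfolding binomial_mult_trinomial by (metis exponents_poly_of_exponents)
    then have "m = 3 * k" "p = 2 * k" "q = 4 * k"
      using that(2-) sumset_pair_triple_eq_imp_progression by blast+
    then have "poly_of_exponents {#0, k#} * poly_of_exponents {#0, p, q#} = (\<Sum>i<6. monom 1 (i * k))"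
      by (simp only: binomial_mult_trinomial geometric_exponents)
    then show ?thesis
      using \<open>k < m\<close> \<open>m = 3 * k\<close> by (intro exI[of _ k]) simp
  qed
  obtain k m p q p' q' where
      A: "A = poly_of_exponents {#0, k#}" and A': "A' = poly_of_exponents {#0, m#}"
    and B: "p \<le> q" "B = poly_of_exponents {#0, p, q#}"
    and B': "p' \<le> q'" "B' = poly_of_exponents {#0, p', q'#}"
    using assms(3-) poly_1_eq_2_imp_binomial poly_1_eq_3_imp_trinomial by metis
  have "k \<noteq> m"
    using \<open>A \<noteq> A'\<close> A A' by auto
  then show ?thesis
  proof (cases k m rule: linorder_cases)
    case less
    then show ?thesis
      using progression eq A A' B B' by blast
  next
    case greater
    then show ?thesis
      using progression[of m p' q' k p q] eq A A' B B' by simp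
  qed simp
qed

lemma distinct_N1_factorisations_split_X:
  assumes M: "N1_factorisation M P" and M': "N1_factorisation M' P" and "M \<noteq> M'"
  obtains r N N' where "P = monom 1 r * prod_mset N" "prod_mset N' = prod_mset N" "N \<noteq> N'"
    and "\<forall>Q\<in>#N + N'. N1_irreducible Q \<and> coeff Q 0 \<noteq> 0 \<and> 2 \<le> poly Q 1"
proof -
  obtain r N where MN: "M = replicate_mset r (monom 1 1) + N" "P = monom 1 r * prod_mset N"
    and N: "\<forall>Q\<in>#N. N1_irreducible Q \<and> coeff Q 0 \<noteq> 0 \<and> 2 \<le> poly Q 1"
    using M by (rule N1_factorisation_split_X)
  obtain r' N' where MN': "M' = replicate_mset r' (monom 1 1) + N'" "P = monom 1 r' * prod_mset N'"
    and N': "\<forall>Q\<in>#N'. N1_irreducible Q \<and> coeff Q 0 \<noteq> 0 \<and> 2 \<le> poly Q 1"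
    using M' by (rule N1_factorisation_split_X)
  have "coeff (prod_mset N) 0 \<noteq> 0" "coeff (prod_mset N') 0 \<noteq> 0"
    using N N' coeff_0_prod_mset_nonzero by blast+
  then have "r = r'" and "prod_mset N' = prod_mset N"
    using monom_mult_cancel[of r "prod_mset N" r' "prod_mset N'"] MN(2) MN'(2) by auto
  moreover have "N \<noteq> N'"
    using \<open>M \<noteq> M'\<close> \<open>r = r'\<close> MN MN' by auto
  ultimately show thesis
    using N N' by (intro that[OF MN(2)]) auto
qed

theorem mainTheorem9:
  fixes P :: "nat poly"
  assumes "poly P 1 = 6"
    and "\<not> N1_unique_factorisation P"
  shows "\<exists>a b::nat. b \<ge> 1 \<and> P = monom 1 a * (\<Sum>i<6. monom 1 (i * b))"
proof -
  obtain M M' where "N1_factorisation M P" "N1_factorisation M' P" "M \<noteq> M'"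
    using assms(2) unfolding N1_unique_factorisation_def by blast
  then obtain r N N' where P: "P = monom 1 r * prod_mset N" and R: "prod_mset N' = prod_mset N"
    and "N \<noteq> N'" and N: "\<forall>Q\<in>#N + N'. N1_irreducible Q \<and> coeff Q 0 \<noteq> 0 \<and> 2 \<le> poly Q 1"
    by (rule distinct_N1_factorisations_split_X)
  have "N1_factorisation N (prod_mset N)" "N1_factorisation N' (prod_mset N)"
    using N R unfolding N1_factorisation_def by auto
  then have reducible: "\<not> N1_irreducible (prod_mset N)"
    using \<open>N \<noteq> N'\<close> N1_factorisation_of_irreducible by metis
  have six: "poly (prod_mset N) 1 = 6"
    using assms(1) P by (simp add: poly_monom)
  obtain A B where AB: "N = {#A, B#}" "poly A 1 = 2" "poly B 1 = 3"
    by (rule reducible_prod_mset_poly_1_eq_6[of N]) (use N six reducible in auto)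
  obtain A' B' where AB': "N' = {#A', B'#}" "poly A' 1 = 2" "poly B' 1 = 3"
    by (rule reducible_prod_mset_poly_1_eq_6[of N']) (use N R six reducible in auto)
  have eq: "A * B = A' * B'"
    using R AB AB' by simp
  have "A \<noteq> 0" "coeff A 0 \<noteq> 0" "coeff B 0 \<noteq> 0" "coeff A' 0 \<noteq> 0" "coeff B' 0 \<noteq> 0"
    using N AB(1) AB'(1) N1_irreducible_nonzero by auto
  moreover have "A \<noteq> A'"
    using \<open>N \<noteq> N'\<close> AB(1) AB'(1) eq nat_poly_mult_left_cancel[OF \<open>A \<noteq> 0\<close>] by auto
  ultimately obtain b where "b \<ge> 1" "A * B = (\<Sum>i<6. monom 1 (i * b))"
    using binomial_trinomial_factorisations_eq[OF eq] AB AB' by blast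
  then show ?thesis
    using P AB(1) by auto
qed

end
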